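(* Let $\phi,\psi$ be literals on two distinct atoms, and let $C=\{\mathbf{O}(\phi),\ \mathbf{O}(\neg\phi|\psi),\ \mathbf{O}(\phi|\neg\psi)\}$ (a contrary-to-duty framework). Then $C$ is modelled by a consistent CP-net: the prescriptive CP-net induced by $C$ is consistent and its induced preorder is a preference model satisfying every norm in $C$.
   Context: Norms: $\mathbf{O}(\chi|\theta)$ reads "under condition $\chi$ (a conjunction of literals), the literal $\theta$ is obligatory"; $\mathbf{O}(\theta)$ abbreviates $\mathbf{O}(\top|\theta)$. Thus $C$ says: $\phi$ is obligatory; under $\neg\phi$, $\psi$ is obligatory; under $\phi$, $\neg\psi$ is obligatory. Outcomes are complete truth assignments to the atoms (here: to the variables $\Phi$, $\Psi$ of $\phi,\psi$, each with two values, $\bar\phi$ denoting the complement of $\phi$). A preference model is a preorder $\preceq$ on outcomes; $v\preceq_\theta u$ means $v,u$ differ only in the variable of $\theta$ and $v\preceq u$. A preference model satisfies $\mathbf{O}(\chi|\theta)$ iff for all outcomes $v,u$ with $v\models\chi$, $u\models\chi$: if $v\models\theta$ and $v\preceq_\theta u$ then $u\models\theta$. A CP-net (with indifference) over binary variables consists of a directed dependency graph and, for each variable, a conditional preference table of statements "$a: x\prec y$" or "$a: x\approx y$" over its two values given an assignment $a$ to its parents. Its induced preorder is the reflexive transitive closure of the single-variable flips: outcomes differing only in variable $X$ are related as the applicable statement of the table of $X$ (given the parents' values) ranks their $X$-values. The prescriptive CP-net of a set of obligations adds, for each $\mathbf{O}(\chi|\theta)$, edges from the variables of the literals of $\chi$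 to the variable $\Theta$ of $\theta$ and the statement $\chi:\bar\theta\prec\theta$ to the table of $\Theta$. A CP-net is consistent if its induced order contains no dominance cycle, i.e. no outcome is strictly preferred to itself. *)

theory Defs
  imports Main
begin

type_synonym 'v literal = "'v \<times> bool"
type_synonym 'v outcome = "'v \<Rightarrow> bool"

definition lit_holds :: "'v outcome \<Rightarrow> 'v literal \<Rightarrow> bool" where
  "lit_holds v l \<longleftrightarrow> v (fst l) = snd l"

definition neg_lit :: "'v literal \<Rightarrow> 'v literal" where
  "neg_lit l = (fst l, \<not> snd l)"

definition cond_holds :: "'v outcome \<Rightarrow> 'v literal list \<Rightarrow> bool" where
  "cond_holds v \<chi> \<longleftrightarrow> (\<forall>l\<in>set \<chi>. lit_holds v l)"

text \<open>Obligation O(\<chi>|\<theta>): condition \<chi>, obligatory literal \<theta>.\<close>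
datatype 'v obligation = Obl "'v literal list" "'v literal"

abbreviation Obl_uncond :: "'v literal \<Rightarrow> 'v obligation" where
  "Obl_uncond \<theta> \<equiv> Obl [] \<theta>"

text \<open>Preference models: preorders on outcomes; higher = more preferred.\<close>
definition preference_model :: "('v outcome \<Rightarrow> 'v outcome \<Rightarrow> bool) \<Rightarrow> bool" where
  "preference_model R \<longleftrightarrow> reflp R \<and> transp R"

definition differ_only_in :: "'v \<Rightarrow> 'v outcome \<Rightarrow> 'v outcome \<Rightarrow> bool" where
  "differ_only_in x v u \<longleftrightarrow> (\<forall>y. y \<noteq> x \<longrightarrow> v y = u y)"

definition pref_on :: "('v outcome \<Rightarrow> 'v outcome \<Rightarrow> bool) \<Rightarrow> 'v literal \<Rightarrow> 'v outcome \<Rightarrow> 'v outcome \<Rightarrow> bool" where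
  "pref_on R \<theta> v u \<longleftrightarrow> differ_only_in (fst \<theta>) v u \<and> R v u"

fun satisfies :: "('v outcome \<Rightarrow> 'v outcome \<Rightarrow> bool) \<Rightarrow> 'v obligation \<Rightarrow> bool" where
  "satisfies R (Obl \<chi> \<theta>) \<longleftrightarrow>
     (\<forall>v u. cond_holds v \<chi> \<longrightarrow> cond_holds u \<chi> \<longrightarrow> lit_holds v \<theta> \<longrightarrow> pref_on R \<theta> v u \<longrightarrow> lit_holds u \<theta>)"

text \<open>CP-net statements for a (binary) variable X: \<open>Pref a x y\<close> is "a: x \<prec> y",
  \<open>Indiff a\<close> is "a: x \<approx> y" (for the two values of X).\<close>
datatype 'v cp_stmt = Pref "'v literal list" bool bool | Indiff "'v literal list"

record 'v cpnet =
  dep_graph :: "('v \<times> 'v) set"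
  cpt :: "'v \<Rightarrow> 'v cp_stmt set"

fun stmt_cond :: "'v cp_stmt \<Rightarrow> 'v literal list" where
  "stmt_cond (Pref a x y) = a"
| "stmt_cond (Indiff a) = a"

text \<open>Worsening-to-improving single-variable flip: u is at least as preferred as v,
  v and u differ only in X, via an applicable statement of the table of X.\<close>
fun stmt_ranks :: "'v cp_stmt \<Rightarrow> bool \<Rightarrow> bool \<Rightarrow> bool" where
  "stmt_ranks (Pref a x y) b c \<longleftrightarrow> b = x \<and> c = y \<and> x \<noteq> y"
| "stmt_ranks (Indiff a) b c \<longleftrightarrow> b \<noteq> c"

definition flip :: "'v cpnet \<Rightarrow> 'v outcome \<Rightarrow> 'v outcome \<Rightarrow> bool" where
  "flip N v u \<longleftrightarrow> (\<exists>X. differ_only_in X v u \<and>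
     (\<exists>s\<in>cpt N X. cond_holds v (stmt_cond s) \<and> cond_holds u (stmt_cond s) \<and> stmt_ranks s (v X) (u X)))"

definition strict_flip :: "'v cpnet \<Rightarrow> 'v outcome \<Rightarrow> 'v outcome \<Rightarrow> bool" where
  "strict_flip N v u \<longleftrightarrow> (\<exists>X. differ_only_in X v u \<and>
     (\<exists>a x y. Pref a x y \<in> cpt N X \<and> cond_holds v a \<and> cond_holds u a \<and> stmt_ranks (Pref a x y) (v X) (u X)))"

definition induced :: "'v cpnet \<Rightarrow> 'v outcome \<Rightarrow> 'v outcome \<Rightarrow> bool" where
  "induced N = (flip N)\<^sup>*\<^sup>*"

text \<open>Consistency: no dominance cycle, i.e. no chain of flips from an outcome back to
  itself containing a strict flip (no outcome strictly preferred to itself).\<close>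
definition cpnet_consistent :: "'v cpnet \<Rightarrow> bool" where
  "cpnet_consistent N \<longleftrightarrow> \<not> (\<exists>v u. strict_flip N v u \<and> induced N u v)"

definition prescriptive :: "'v obligation set \<Rightarrow> 'v cpnet" where
  "prescriptive C = \<lparr> dep_graph = {(fst l, fst \<theta>) | l \<chi> \<theta>. Obl \<chi> \<theta> \<in> C \<and> l \<in> set \<chi>},
     cpt = (\<lambda>X. {Pref \<chi> (\<not> snd \<theta>) (snd \<theta>) | \<chi> \<theta>. Obl \<chi> \<theta> \<in> C \<and> fst \<theta> = X}) \<rparr>"

end

theory Submission
  imports Defs
begin

text \<open>Every flip of the prescriptive CP-net of the contrary-to-duty framework strictly increases
  the rank that gives 3 to \<phi>\<and>\<not>\<psi>, 2 to \<phi>\<and>\<psi>, 1 to \<not>\<phi>\<and>\<psi> and 0 to \<not>\<phi>\<and>\<not>\<psi>. A net with such a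
  rank has no dominance cycle, and its induced preorder satisfies each of its norms O(\<chi>|\<theta>):
  a fulfilment v and a violation u of the norm that differ only in the variable of \<theta> are joined
  by the flip from u to v, so v has the higher rank and cannot lie below u.\<close>

lemma rtranclp_imp_eq_or_less:
  fixes rank :: "'a \<Rightarrow> 'b::order"
  assumes "R\<^sup>*\<^sup>* v u" and "\<And>a b. R a b \<Longrightarrow> rank a < rank b"
  shows "v = u \<or> rank v < rank u"
  using assms(1)
proof (induction rule: rtranclp_induct)
  case base
  then show ?case by simp
next
  case (step w z)
  then show ?case using assms(2)[of w z] by (auto intro: less_trans)
qed

lemma strict_flip_imp_flip: "strict_flip N v u \<Longrightarrow> flip N v u"
  unfolding strict_flip_def flip_def by (metis stmt_cond.simps(1))

lemma preference_model_induced: "preference_model (induced N)"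
  unfolding preference_model_def induced_def by (simp add: reflpI transpI)

lemma cpnet_consistent_if_flip_rank:
  fixes rank :: "'v outcome \<Rightarrow> 'b::order"
  assumes "\<And>v u. flip N v u \<Longrightarrow> rank v < rank u"
  shows "cpnet_consistent N"
  unfolding cpnet_consistent_def
proof clarify
  fix v u
  assume "strict_flip N v u" and "induced N u v"
  then have "rank v < rank u" and "u = v \<or> rank u < rank v"
    using assms strict_flip_imp_flip rtranclp_imp_eq_or_less[of "flip N" u v]
    unfolding induced_def by blast+
  then show False by auto
qed

lemma flip_prescriptive_violation_to_fulfilment:
  assumes "Obl \<chi> \<theta> \<in> C"
    and "cond_holds u \<chi>" "cond_holds v \<chi>"
    and "differ_only_in (fst \<theta>) u v"
    and "\<not> lit_holds u \<theta>" "lit_holds v \<theta>"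
  shows "flip (prescriptive C) u v"
  unfolding flip_def
proof (intro exI bexI conjI)
  show "Pref \<chi> (\<not> snd \<theta>) (snd \<theta>) \<in> cpt (prescriptive C) (fst \<theta>)"
    using assms(1) unfolding prescriptive_def by auto
  show "stmt_ranks (Pref \<chi> (\<not> snd \<theta>) (snd \<theta>)) (u (fst \<theta>)) (v (fst \<theta>))"
    using assms(5,6) unfolding lit_holds_def by auto
qed (use assms(2-4) in auto)

lemma satisfies_induced_prescriptive_if_flip_rank:
  fixes rank :: "'v outcome \<Rightarrow> 'b::order"
  assumes flip_rank: "\<And>v u. flip (prescriptive C) v u \<Longrightarrow> rank v < rank u"
    and "n \<in> C"
  shows "satisfies (induced (prescriptive C)) n"
proof -
  obtain \<chi> \<theta> where n: "n = Obl \<chi> \<theta>" by (cases n)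
  show ?thesis unfolding n satisfies.simps
  proof (intro allI impI, rule ccontr)
    fix v u
    assume "cond_holds v \<chi>" "cond_holds u \<chi>" "lit_holds v \<theta>"
      and pref: "pref_on (induced (prescriptive C)) \<theta> v u" and "\<not> lit_holds u \<theta>"
    moreover have "differ_only_in (fst \<theta>) u v"
      using pref unfolding pref_on_def differ_only_in_def by metis
    ultimately have "rank u < rank v"
      using flip_rank flip_prescriptive_violation_to_fulfilment \<open>n \<in> C\<close> n by metis
    moreover have "v = u \<or> rank v < rank u"
      using pref flip_rank rtranclp_imp_eq_or_less unfolding pref_on_def induced_def by metis
    ultimately show False
      using \<open>lit_holds v \<theta>\<close> \<open>\<not> lit_holds u \<theta>\<close> by auto
  qed
qed

definition ctd_norms :: "'v literal \<Rightarrow> 'v literal \<Rightarrow> 'v obligation set" where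
  "ctd_norms \<phi> \<psi> = {Obl_uncond \<phi>, Obl [neg_lit \<phi>] \<psi>, Obl [\<phi>] (neg_lit \<psi>)}"

definition ctd_rank :: "'v literal \<Rightarrow> 'v literal \<Rightarrow> 'v outcome \<Rightarrow> nat" where
  "ctd_rank \<phi> \<psi> w =
     (if lit_holds w \<phi> then (if lit_holds w \<psi> then 2 else 3) else (if lit_holds w \<psi> then 1 else 0))"

lemma flip_ctd_norms_rank_less:
  assumes "fst \<phi> \<noteq> fst \<psi>" and "flip (prescriptive (ctd_norms \<phi> \<psi>)) v u"
  shows "ctd_rank \<phi> \<psi> v < ctd_rank \<phi> \<psi> u"
  using assms
  unfolding flip_def prescriptive_def ctd_norms_def ctd_rank_def differ_only_in_def
    cond_holds_def lit_holds_def neg_lit_def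
  by (auto split: if_splits)

theorem mainTheorem2:
  fixes X Y :: 'v and p q :: bool
  assumes "X \<noteq> Y" and "(UNIV :: 'v set) = {X, Y}"
  shows "let \<phi> = (X, p); \<psi> = (Y, q);
             C = {Obl_uncond \<phi>, Obl [neg_lit \<phi>] \<psi>, Obl [\<phi>] (neg_lit \<psi>)}
         in cpnet_consistent (prescriptive C)
            \<and> preference_model (induced (prescriptive C))
            \<and> (\<forall>n\<in>C. satisfies (induced (prescriptive C)) n)"
proof -
  let ?C = "ctd_norms (X, p) (Y, q)" and ?rank = "ctd_rank (X, p) (Y, q)"
  have flip_rank: "\<And>v u. flip (prescriptive ?C) v u \<Longrightarrow> ?rank v < ?rank u"
    using flip_ctd_norms_rank_less \<open>X \<noteq> Y\<close> by fastforce
  have "cpnet_consistent (prescriptive ?C)"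
    using cpnet_consistent_if_flip_rank flip_rank by blast
  moreover have "\<forall>n\<in>?C. satisfies (induced (prescriptive ?C)) n"
    using satisfies_induced_prescriptive_if_flip_rank flip_rank by blast
  ultimately show ?thesis
    unfolding Let_def ctd_norms_def[symmetric] using preference_model_induced by blast
qed

end
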